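(* Let $\mathcal I=(I_1,\dots,I_p)$ be an ideal marking of the unit disk $\mathbb D$. For any two distinct unordered pairs $\{m,n\}\neq\{m',n'\}$ of non-adjacent indices with $\overline{\mathcal W}_{mn}>2$ and $\overline{\mathcal W}_{m'n'}>2$, the truncated quadrilaterals $\Pi_{mn}$ and $\Pi_{m'n'}$ are disjoint. Consequently the vertical foliations $\mathcal F_{mn}$ of all the $\Pi_{mn}$ together form a lamination $\mathcal F(\mathbb D,\mathcal I)$ of $\mathbb D$ supported on $\bigsqcup\Pi_{mn}$.
   Context: An ideal marking of $\mathbb D$ of cardinality $p$ is a tiling of the unit circle $\mathbb T=\partial\mathbb D$ into closed arcs $I_1,\dots,I_p$ listed in cyclic order, indices taken in $\mathbb Z/p\mathbb Z$; indices $m,n$ are adjacent if $|m-n|\le1$ in $\mathbb Z/p\mathbb Z$. For non-adjacent $m,n$, $\overline\Pi_{mn}$ denotes $\mathbb D$ regarded as a conformal quadrilateral with horizontal sides $I_m$ and $I_n$, and $\overline{\mathcal W}_{mn}$ is its width, i.e. the extremal width of the family of paths in $\mathbb D$ joining $I_m$ to $I_n$. When $\overline{\mathcal W}_{mn}>2$, let $\phi:\overline\Pi_{mn}\to(0,\overline{\mathcal W}_{mn})\times(0,1)$ be the conformal map sending $I_m$ to the bottom side and $I_n$ to the top side; the truncated quadrilateral is $\Pi_{mn}=\phi^{-1}\big((1,\overline{\mathcal W}_{mn}-1)\times(0,1)\big)$ (the two end squares are removed), and $\mathcal F_{mn}$ is the pullback under $\phi$ of the foliation by vertical segments. Its width is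 $\mathcal W_{mn}=\overline{\mathcal W}_{mn}-2$; set $\mathcal W_{mn}=0$ if $\overline{\mathcal W}_{mn}\le2$. *)

theory Defs
  imports "HOL-Complex_Analysis.Complex_Analysis"
begin

definition ideal_marking :: "nat \<Rightarrow> (nat \<Rightarrow> real) \<Rightarrow> bool" where
  "ideal_marking p \<theta> \<longleftrightarrow> 1 \<le> p \<and> (\<forall>k. Suc k < p \<longrightarrow> \<theta> k < \<theta> (Suc k))
      \<and> \<theta> (p - 1) < \<theta> 0 + 2 * pi"

definition next_angle :: "nat \<Rightarrow> (nat \<Rightarrow> real) \<Rightarrow> nat \<Rightarrow> real" where
  "next_angle p \<theta> k = (if Suc (k mod p) < p then \<theta> (Suc (k mod p)) else \<theta> 0 + 2 * pi)"

definition marking_arc :: "nat \<Rightarrow> (nat \<Rightarrow> real) \<Rightarrow> nat \<Rightarrow> complex set" where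
  "marking_arc p \<theta> k = (\<lambda>t. cis t) ` {\<theta> (k mod p) .. next_angle p \<theta> k}"

definition adjacent_idx :: "nat \<Rightarrow> nat \<Rightarrow> nat \<Rightarrow> bool" where
  "adjacent_idx p m n \<longleftrightarrow> (int m - int n) mod int p \<in> {0, 1, int p - 1}"

text \<open>The number W is then the width of the quadrilateral.\<close>
definition quad_map ::
  "nat \<Rightarrow> (nat \<Rightarrow> real) \<Rightarrow> nat \<Rightarrow> nat \<Rightarrow> (complex \<Rightarrow> complex) \<Rightarrow> real \<Rightarrow> bool" where
  "quad_map p \<theta> m n \<phi> W \<longleftrightarrow> 0 < W
     \<and> \<phi> holomorphic_on ball 0 1 \<and> inj_on \<phi> (ball 0 1)
     \<and> \<phi> ` ball 0 1 = {z. 0 < Re z \<and> Re z < W \<and> 0 < Im z \<and> Im z < 1}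
     \<and> continuous_on (cball 0 1) \<phi>
     \<and> \<phi> ` marking_arc p \<theta> m = {z. 0 \<le> Re z \<and> Re z \<le> W \<and> Im z = 0}
     \<and> \<phi> ` marking_arc p \<theta> n = {z. 0 \<le> Re z \<and> Re z \<le> W \<and> Im z = 1}"

definition truncated_quad :: "(complex \<Rightarrow> complex) \<Rightarrow> real \<Rightarrow> complex set" where
  "truncated_quad \<phi> W = {z \<in> ball 0 1. 1 < Re (\<phi> z) \<and> Re (\<phi> z) < W - 1}"

definition vertical_leaf :: "(complex \<Rightarrow> complex) \<Rightarrow> real \<Rightarrow> complex set" where
  "vertical_leaf \<phi> x = {z \<in> ball 0 1. Re (\<phi> z) = x}"

end

theory Submission
  imports Defs
begin

text \<open>
  Suppose z lies in both truncated quadrilaterals. Swapping top and bottom if necessary, we may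
  assume that the bottom arc I_m of the first quadrilateral is not a side of the second one, and
  vice versa. Every arc other than the two horizontal sides is sent by phi into a single vertical
  side of its rectangle: its interior avoids the open rectangle, and by Schwarz reflection the
  boundary map is injective over the open horizontal sides. Following the leaf of the second
  foliation through z down to I_m', the value of Re phi therefore runs through an interval of
  length greater than 1 ending at 0 or W. So phi' composed with the inverse of phi restricts to
  a conformal embedding of a rectangle (a, b) x (0, 1) with b - a > 1 into (0, W') x (0, 1) whose
  vertical segments all start on a vertical side (the image of I_m) and reach the leaf
  Re w = Re (phi' z), at horizontal distance c > 1 from both sides. This contradicts the
  length--area inequality (b - a) c \<le> 1.
\<close>

section \<open>Area and the length--area inequality\<close>

lemma Basis_vec2: "(Basis :: (real^2) set) = {axis 1 1, axis 2 1}"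
  unfolding Basis_vec_def by (auto simp: UNIV_2)

lemma prod_Basis_vec2: "(\<Prod>b\<in>(Basis :: (real^2) set). f b) = f (axis 1 1) * f (axis 2 1)"
  by (simp add: Basis_vec2 axis_eq_axis)

lemma lborel_vec2_eq_pair:
  "distr (lborel :: (real^2) measure) borel (\<lambda>v. (v$1, v$2)) = (lborel :: (real \<times> real) measure)"
proof (rule lborel_eqI[symmetric])
  fix l u :: "real \<times> real"
  assume le: "\<And>b. b \<in> Basis \<Longrightarrow> l \<bullet> b \<le> u \<bullet> b"
  have le1: "fst l \<le> fst u" using le[of "(1,0)"] by (cases l; cases u) (simp add: Basis_prod_def)
  have le2: "snd l \<le> snd u" using le[of "(0,1)"] by (cases l; cases u) (simp add: Basis_prod_def)
  define L :: "real^2" where "L = (\<chi> i. if i = 1 then fst l else snd l)"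
  define U :: "real^2" where "U = (\<chi> i. if i = 1 then fst u else snd u)"
  have meas: "(\<lambda>v::real^2. (v$1, v$2)) \<in> borel \<rightarrow>\<^sub>M borel"
    by (intro borel_measurable_continuous_onI continuous_intros)
  have "(\<lambda>v::real^2. (v$1, v$2)) -` box l u = box L U"
  proof -
    have "v \<in> box l u \<longleftrightarrow> fst l < fst v \<and> fst v < fst u \<and> snd l < snd v \<and> snd v < snd u"
      for v :: "real \<times> real"
      by (cases l; cases u; cases v) (auto simp: box_def Basis_prod_def)
    moreover have "w \<in> box L U \<longleftrightarrow> fst l < w$1 \<and> w$1 < fst u \<and> snd l < w$2 \<and> w$2 < snd u"
      for w :: "real^2"
      by (simp add: box_def Basis_vec2 inner_axis L_def U_def)
    ultimately show ?thesis by auto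
  qed
  then have "emeasure (distr lborel borel (\<lambda>v::real^2. (v$1, v$2))) (box l u) = emeasure lborel (box L U)"
    using meas by (simp add: emeasure_distr)
  also have "\<dots> = ennreal ((fst u - fst l) * (snd u - snd l))"
  proof -
    have "\<forall>b\<in>Basis. L \<bullet> b \<le> U \<bullet> b"
      using le1 le2 by (simp add: Basis_vec2 inner_axis L_def U_def)
    then show ?thesis
      by (simp add: emeasure_lborel_box_eq prod_Basis_vec2 inner_axis L_def U_def)
  qed
  also have "\<dots> = (\<Prod>b\<in>Basis. (u - l) \<bullet> b)"
    by (cases l; cases u) (simp add: Basis_prod_def prod.insert mult.commute)
  finally show "emeasure (distr lborel borel (\<lambda>v::real^2. (v$1, v$2))) (box l u)
      = (\<Prod>b\<in>Basis. (u - l) \<bullet> b)" .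
qed simp

text \<open>The change of variables formula of HOL-Analysis is stated on real^'n; these maps identify
  the complex plane with real^2.\<close>
definition complex_of_vec2 :: "real^2 \<Rightarrow> complex" where
  "complex_of_vec2 v = Complex (v$1) (v$2)"

definition vec2_of_complex :: "complex \<Rightarrow> real^2" where
  "vec2_of_complex z = (\<chi> i. if i = 1 then Re z else Im z)"

lemma vec2_of_complex_inverse [simp]: "vec2_of_complex (complex_of_vec2 v) = v"
  unfolding vec2_of_complex_def complex_of_vec2_def vec_eq_iff using exhaust_2 by auto

lemma complex_of_vec2_inverse [simp]: "complex_of_vec2 (vec2_of_complex z) = z"
  unfolding vec2_of_complex_def complex_of_vec2_def by (simp add: complex_eq_iff)

lemma bounded_linear_complex_of_vec2: "bounded_linear complex_of_vec2"
  by (rule linear_conv_bounded_linear[THEN iffD1], rule linearI)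
     (auto simp: complex_of_vec2_def complex_eq_iff)

lemma bounded_linear_vec2_of_complex: "bounded_linear vec2_of_complex"
  by (rule linear_conv_bounded_linear[THEN iffD1], rule linearI)
     (auto simp: vec2_of_complex_def vec_eq_iff)

lemma det_complex_multiplication:
  "\<bar>det (matrix (\<lambda>h. vec2_of_complex (d * complex_of_vec2 h)))\<bar> = (cmod d)\<^sup>2"
proof -
  have "det (matrix (\<lambda>h. vec2_of_complex (d * complex_of_vec2 h))) = Re d * Re d - (- Im d) * Im d"
    by (simp add: det_2 matrix_def axis_def vec2_of_complex_def complex_of_vec2_def)
  then show ?thesis
    by (subst cmod_power2) (simp add: power2_eq_square)
qed

lemma inj_on_vec2_conjugate:
  assumes "inj_on g A"
  shows "inj_on (\<lambda>v. vec2_of_complex (g (complex_of_vec2 v))) (complex_of_vec2 -` A)"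
proof (rule inj_onI)
  fix v w assume "v \<in> complex_of_vec2 -` A" "w \<in> complex_of_vec2 -` A"
    and "vec2_of_complex (g (complex_of_vec2 v)) = vec2_of_complex (g (complex_of_vec2 w))"
  then have "complex_of_vec2 v = complex_of_vec2 w"
    using assms by (auto simp: inj_on_def) (metis complex_of_vec2_inverse)
  then show "v = w"
    by (metis vec2_of_complex_inverse)
qed

lemma image_vec2_conjugate:
  "(\<lambda>v. vec2_of_complex (g (complex_of_vec2 v))) ` (complex_of_vec2 -` A) = complex_of_vec2 -` g ` A"
proof
  show "complex_of_vec2 -` g ` A \<subseteq> (\<lambda>v. vec2_of_complex (g (complex_of_vec2 v))) ` (complex_of_vec2 -` A)"
  proof
    fix w assume "w \<in> complex_of_vec2 -` g ` A"
    then obtain a where "a \<in> A" "complex_of_vec2 w = g a" by auto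
    then show "w \<in> (\<lambda>v. vec2_of_complex (g (complex_of_vec2 v))) ` (complex_of_vec2 -` A)"
      by (intro image_eqI[of _ _ "vec2_of_complex a"]) (auto, metis vec2_of_complex_inverse)
  qed
qed auto

lemma nn_integral_deriv_squared_eq_area_vec2:
  fixes g :: "complex \<Rightarrow> complex"
  assumes A: "open A" and hol: "g holomorphic_on A" and inj: "inj_on g A"
    and bdd: "bounded (g ` A)"
  shows "(\<integral>\<^sup>+v. ennreal ((cmod (deriv g (complex_of_vec2 v)))\<^sup>2) * indicator (complex_of_vec2 -` A) v \<partial>lborel)
    = emeasure lborel (complex_of_vec2 -` g ` A)"
proof -
  define S where "S = complex_of_vec2 -` A"
  define G where "G = (\<lambda>v. vec2_of_complex (g (complex_of_vec2 v)))"
  define G' where "G' = (\<lambda>v h. vec2_of_complex (deriv g (complex_of_vec2 v) * complex_of_vec2 h))"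
  have cont: "continuous_on UNIV complex_of_vec2"
    by (intro linear_continuous_on bounded_linear_complex_of_vec2)
  have "open S"
    unfolding S_def using A cont by (rule open_vimage)
  have der: "(G has_derivative G' v) (at v within S)" if "v \<in> S" for v
  proof -
    have "(g has_derivative (\<lambda>h. deriv g (complex_of_vec2 v) * h)) (at (complex_of_vec2 v))"
      using holomorphic_derivI[OF hol A] that by (simp add: S_def has_field_derivative_def)
    then show ?thesis
      unfolding G_def G'_def
      by (intro has_derivative_compose[OF has_derivative_compose[OF
            bounded_linear_imp_has_derivative[OF bounded_linear_complex_of_vec2]]
            bounded_linear_imp_has_derivative[OF bounded_linear_vec2_of_complex]]) simp
  qed
  have "inj_on G S"
    unfolding G_def S_def using inj by (rule inj_on_vec2_conjugate)
  have image: "G ` S = complex_of_vec2 -` g ` A"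
    unfolding G_def S_def by (rule image_vec2_conjugate)
  have "open (G ` S)"
    unfolding image using open_mapping_thm3[OF hol A inj] cont by (rule open_vimage)
  moreover have "bounded (G ` S)"
  proof (rule bounded_subset)
    show "bounded (vec2_of_complex ` g ` A)"
      using bdd bounded_linear_vec2_of_complex by (rule bounded_linear_image)
    show "G ` S \<subseteq> vec2_of_complex ` g ` A"
      by (auto simp: G_def S_def)
  qed
  ultimately have lm: "G ` S \<in> lmeasurable"
    by (simp add: lmeasurable_open)
  have "S \<in> sets lebesgue"
    using \<open>open S\<close> by (simp add: borel_open sets_completionI_sets)
  then have "((\<lambda>v. \<bar>det (matrix (G' v))\<bar>) has_integral measure lebesgue (G ` S)) S"
    using has_measure_differentiable_image[OF _ der \<open>inj_on G S\<close>] lm by blast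
  then have "(\<integral>\<^sup>+v. ennreal \<bar>det (matrix (G' v))\<bar> * indicator S v \<partial>lborel) = ennreal (measure lebesgue (G ` S))"
    by (rule nn_integral_has_integral_lebesgue'[rotated]) simp
  also have "\<dots> = emeasure lebesgue (G ` S)"
    using lm by (simp add: emeasure_eq_measure2)
  also have "\<dots> = emeasure lborel (G ` S)"
    using \<open>open (G ` S)\<close> by (simp add: emeasure_completion)
  finally show ?thesis
    unfolding image by (simp add: G'_def det_complex_multiplication S_def)
qed

lemma borel_measurable_continuous_on_times_indicator:
  fixes k :: "'a::topological_space \<Rightarrow> real"
  assumes U: "open U" and k: "continuous_on U k"
  shows "(\<lambda>p. ennreal (k p) * indicator U p) \<in> borel_measurable borel"
proof -
  have [measurable]: "(\<lambda>p. indicator U p *\<^sub>R k p) \<in> borel_measurable borel"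
    by (rule borel_measurable_continuous_on_indicator[OF borel_open[OF U] k])
  have "(\<lambda>p. ennreal (indicator U p *\<^sub>R k p)) \<in> borel_measurable borel"
    by measurable
  moreover have "(\<lambda>p. ennreal (k p) * indicator U p) = (\<lambda>p. ennreal (indicator U p *\<^sub>R k p))"
    by (auto simp: fun_eq_iff indicator_def)
  ultimately show ?thesis by simp
qed

lemma continuous_on_case_prod_Complex: "continuous_on S (case_prod Complex)"
  by (auto simp: Complex_eq case_prod_unfold intro!: continuous_intros)

lemma nn_integral_deriv_squared_eq_area:
  fixes g :: "complex \<Rightarrow> complex"
  assumes A: "open A" and hol: "g holomorphic_on A" and inj: "inj_on g A"
    and bdd: "bounded (g ` A)"
  shows "(\<integral>\<^sup>+p. ennreal ((cmod (deriv g (case_prod Complex p)))\<^sup>2) * indicator (case_prod Complex -` A) p \<partial>lborel)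
    = emeasure lborel (case_prod Complex -` g ` A)"
proof -
  let ?T = "\<lambda>v::real^2. (v$1, v$2)"
  have T: "?T \<in> lborel \<rightarrow>\<^sub>M borel"
    by (simp add: borel_measurable_continuous_onI continuous_intros)
  have "open (case_prod Complex -` A)"
    using A continuous_on_case_prod_Complex by (rule open_vimage)
  then have meas: "(\<lambda>p. ennreal ((cmod (deriv g (case_prod Complex p)))\<^sup>2)
      * indicator (case_prod Complex -` A) p) \<in> borel_measurable borel"
    by (rule borel_measurable_continuous_on_times_indicator)
      (intro continuous_intros continuous_on_compose2[OF holomorphic_on_imp_continuous_on[OF
          holomorphic_deriv[OF hol A]] continuous_on_case_prod_Complex], auto)
  have "open (case_prod Complex -` g ` A)"
    using open_mapping_thm3[OF hol A inj] continuous_on_case_prod_Complex by (rule open_vimage)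
  then have "emeasure lborel (case_prod Complex -` g ` A)
      = emeasure (distr lborel borel ?T) (case_prod Complex -` g ` A)"
    by (simp add: lborel_vec2_eq_pair)
  also have "\<dots> = emeasure lborel (complex_of_vec2 -` g ` A)"
    using T \<open>open (case_prod Complex -` g ` A)\<close>
    by (simp add: emeasure_distr vimage_def complex_of_vec2_def)
  also have "\<dots> = (\<integral>\<^sup>+v. ennreal ((cmod (deriv g (complex_of_vec2 v)))\<^sup>2)
      * indicator (complex_of_vec2 -` A) v \<partial>lborel)"
    by (rule nn_integral_deriv_squared_eq_area_vec2[OF A hol inj bdd, symmetric])
  also have "\<dots> = (\<integral>\<^sup>+p. ennreal ((cmod (deriv g (case_prod Complex p)))\<^sup>2)
      * indicator (case_prod Complex -` A) p \<partial>distr lborel borel ?T)"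
    using meas by (simp add: nn_integral_distr[OF T] measurable_distr_eq1 complex_of_vec2_def indicator_def)
  finally show ?thesis
    by (simp add: lborel_vec2_eq_pair)
qed

definition rect :: "real \<Rightarrow> real \<Rightarrow> complex set" where
  "rect a b = {z. a < Re z \<and> Re z < b \<and> 0 < Im z \<and> Im z < 1}"

lemma open_rect: "open (rect a b)"
  unfolding rect_def by (intro open_Collect_conj open_Collect_less continuous_intros)

lemma bounded_rect: "bounded (rect a b)"
  by (rule bounded_subset[OF bounded_box[of "Complex a 0" "Complex b 1"]])
    (auto simp: rect_def mem_box Basis_complex_def)

lemma Complex_in_rect [simp]: "Complex x y \<in> rect a b \<longleftrightarrow> a < x \<and> x < b \<and> 0 < y \<and> y < 1"
  by (simp add: rect_def)

lemma has_vector_derivative_Complex: "((\<lambda>y. Complex x y) has_vector_derivative \<i>) (at y)"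
proof -
  have "(\<lambda>y. Complex x y) = (\<lambda>y. complex_of_real x + y *\<^sub>R \<i>)"
    by (auto simp: complex_eq_iff)
  then show ?thesis
    by (auto intro!: derivative_eq_intros simp: has_vector_derivative_def)
qed

lemma continuous_on_Complex: "continuous_on T (\<lambda>y. Complex x y)"
  by (auto simp: Complex_eq intro!: continuous_intros)

lemma vertical_segment_length_ge:
  fixes g :: "complex \<Rightarrow> complex" and x y0 t :: real
  assumes S: "open S" and hol: "g holomorphic_on S"
    and seg: "\<And>y. y \<in> {y0..t} \<Longrightarrow> Complex x y \<in> S" and "y0 \<le> t"
  shows "(\<lambda>y. cmod (deriv g (Complex x y))) integrable_on {y0..t}"
    and "norm (g (Complex x t) - g (Complex x y0)) \<le> integral {y0..t} (\<lambda>y. cmod (deriv g (Complex x y)))"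
proof -
  have "continuous_on {y0..t} (\<lambda>y. deriv g (Complex x y))"
    by (rule continuous_on_compose2[OF holomorphic_on_imp_continuous_on[OF holomorphic_deriv[OF hol S]]
          continuous_on_Complex]) (use seg in auto)
  then have int_norm: "(\<lambda>y. cmod (deriv g (Complex x y))) integrable_on {y0..t}"
    and int_deriv: "(\<lambda>y. \<i> * deriv g (Complex x y)) integrable_on {y0..t}"
    by (auto intro!: integrable_continuous_interval continuous_intros)
  then show "(\<lambda>y. cmod (deriv g (Complex x y))) integrable_on {y0..t}"
    by blast
  have "((\<lambda>y. g (Complex x y)) has_vector_derivative (\<i> * deriv g (Complex x y))) (at y within {y0..t})"
    if "y \<in> {y0..t}" for y
    using field_vector_diff_chain_at[OF has_vector_derivative_Complex holomorphic_derivI[OF hol S seg[OF that]]]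
    by (simp add: o_def has_vector_derivative_at_within)
  then have ftc: "((\<lambda>y. \<i> * deriv g (Complex x y)) has_integral (g (Complex x t) - g (Complex x y0))) {y0..t}"
    by (intro fundamental_theorem_of_calculus) (use \<open>y0 \<le> t\<close> in auto)
  have "norm (g (Complex x t) - g (Complex x y0)) = norm (integral {y0..t} (\<lambda>y. \<i> * deriv g (Complex x y)))"
    using integral_unique[OF ftc] by simp
  also have "\<dots> \<le> integral {y0..t} (\<lambda>y. cmod (deriv g (Complex x y)))"
    by (rule integral_norm_bound_integral[OF int_deriv int_norm]) (simp add: norm_mult)
  finally show "norm (g (Complex x t) - g (Complex x y0)) \<le> integral {y0..t} (\<lambda>y. cmod (deriv g (Complex x y)))" .
qed

lemma first_crossing_length_ge:
  fixes g :: "complex \<Rightarrow> complex" and x c y0 y1 :: real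
  assumes S: "open S" and hol: "g holomorphic_on S"
    and seg: "\<And>y. y \<in> {y0..y1} \<Longrightarrow> Complex x y \<in> S"
    and y01: "y0 < y1" and below: "Re (g (Complex x y0)) < c" and above: "c \<le> Re (g (Complex x y1))"
  obtains t where "t \<in> {y0<..y1}" "\<And>y. y \<in> {y0..<t} \<Longrightarrow> Re (g (Complex x y)) < c"
    "(\<lambda>y. cmod (deriv g (Complex x y))) integrable_on {y0..t}"
    "c - Re (g (Complex x y0)) \<le> integral {y0..t} (\<lambda>y. cmod (deriv g (Complex x y)))"
proof -
  define f where "f = (\<lambda>y. Re (g (Complex x y)))"
  have "continuous_on {y0..y1} f"
    unfolding f_def
    by (intro continuous_intros continuous_on_compose2[OF holomorphic_on_imp_continuous_on[OF hol]
          continuous_on_Complex]) (use seg in auto)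
  then have "closed ({y0..y1} \<inter> f -` {c..})"
    by (rule continuous_closed_preimage) auto
  moreover have "y1 \<in> {y0..y1} \<inter> f -` {c..}"
    using above y01 by (simp add: f_def)
  ultimately obtain t where t: "t \<in> {y0..y1} \<inter> f -` {c..}"
    and least: "\<And>s. s \<in> {y0..y1} \<inter> f -` {c..} \<Longrightarrow> t \<le> s"
    using compact_attains_inf[of "{y0..y1} \<inter> f -` {c..}"]
    by (metis bounded_Int bounded_closed_interval compact_eq_bounded_closed empty_iff)
  have "t \<noteq> y0"
    using t below by (auto simp: f_def)
  with t have t_range: "t \<in> {y0<..y1}" by auto
  have before: "f y < c" if "y \<in> {y0..<t}" for y
    using least[of y] that t_range by force
  have seg_t: "Complex x y \<in> S" if "y \<in> {y0..t}" for y
    using seg that t_range by auto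
  have "y0 \<le> t"
    using t_range by simp
  note length = vertical_segment_length_ge[OF S hol seg_t this]
  show thesis
  proof (rule that[OF t_range _ length(1)])
    show "Re (g (Complex x y)) < c" if "y \<in> {y0..<t}" for y
      using before[OF that] by (simp add: f_def)
    have "c - Re (g (Complex x y0)) \<le> Re (g (Complex x t) - g (Complex x y0))"
      using t by (simp add: f_def)
    also have "\<dots> \<le> norm (g (Complex x t) - g (Complex x y0))"
      by (rule complex_Re_le_cmod)
    also note length(2)
    finally show "c - Re (g (Complex x y0)) \<le> integral {y0..t} (\<lambda>y. cmod (deriv g (Complex x y)))" .
  qed
qed

lemma vertical_line_length_ge:
  fixes g :: "complex \<Rightarrow> complex" and x c y1 :: real
  assumes S: "open S" and hol: "g holomorphic_on S"
    and seg: "\<And>y. 0 < y \<Longrightarrow> y < 1 \<Longrightarrow> Complex x y \<in> S"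
    and lim: "((\<lambda>y. Re (g (Complex x y))) \<longlongrightarrow> 0) (at_right 0)"
    and y1: "0 < y1" "y1 < 1" and hit: "c \<le> Re (g (Complex x y1))" and c: "0 < c"
  shows "ennreal c \<le> (\<integral>\<^sup>+y. ennreal (cmod (deriv g (Complex x y)))
           * indicator {y. 0 < y \<and> y < 1 \<and> Re (g (Complex x y)) < c} y \<partial>lborel)"
    (is "_ \<le> ?I")
proof (rule ennreal_le_epsilon)
  fix e :: real assume e: "0 < e"
  have "\<forall>\<^sub>F y in at_right 0. dist (Re (g (Complex x y))) 0 < min e c"
    by (rule tendstoD[OF lim]) (use e c in simp)
  then obtain y' where y': "y' > 0" "\<And>y. 0 < y \<Longrightarrow> y < y' \<Longrightarrow> \<bar>Re (g (Complex x y))\<bar> < min e c"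
    unfolding eventually_at_right_field by auto
  define y0 where "y0 = min y' y1 / 2"
  have y0: "0 < y0" "y0 < y1" "y0 < y'"
    using y' y1 by (auto simp: y0_def)
  then have small: "\<bar>Re (g (Complex x y0))\<bar> < min e c"
    using y' by blast
  obtain t where t: "t \<in> {y0<..y1}" and before: "\<And>y. y \<in> {y0..<t} \<Longrightarrow> Re (g (Complex x y)) < c"
    and int: "(\<lambda>y. cmod (deriv g (Complex x y))) integrable_on {y0..t}"
    and length: "c - Re (g (Complex x y0)) \<le> integral {y0..t} (\<lambda>y. cmod (deriv g (Complex x y)))"
    by (rule first_crossing_length_ge[OF S hol _ y0(2) _ hit]) (use seg y0 y1 small in auto)
  define L where "L = integral {y0..t} (\<lambda>y. cmod (deriv g (Complex x y)))"
  have "ennreal L = (\<integral>\<^sup>+y. ennreal (cmod (deriv g (Complex x y))) * indicator {y0..t} y \<partial>lborel)"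
    unfolding L_def by (rule nn_integral_has_integral_lebesgue'[OF _ integrable_integral[OF int], symmetric]) simp
  also have "\<dots> \<le> ?I"
  proof (rule nn_integral_mono_AE)
    show "AE y in lborel. ennreal (cmod (deriv g (Complex x y))) * indicator {y0..t} y
        \<le> ennreal (cmod (deriv g (Complex x y))) * indicator {y. 0 < y \<and> y < 1 \<and> Re (g (Complex x y)) < c} y"
      using AE_lborel_singleton[of t]
      by eventually_elim (use y0 y1 t before in \<open>auto simp: indicator_def\<close>)
  qed
  finally have "ennreal L \<le> ?I" .
  have "0 \<le> L"
    unfolding L_def by (rule integral_nonneg[OF int]) simp
  have "ennreal c \<le> ennreal (L + e)"
    using length small unfolding L_def by (intro ennreal_leI) auto
  also have "\<dots> = ennreal L + ennreal e"
    using \<open>0 \<le> L\<close> e by (simp add: ennreal_plus)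
  also have "\<dots> \<le> ?I + ennreal e"
    using \<open>ennreal L \<le> ?I\<close> by (rule add_right_mono)
  finally show "ennreal c \<le> ?I + ennreal e" .
qed

lemma vimage_Complex_rect: "case_prod Complex -` rect a b = box (a, 0) (b, 1)"
  by (auto simp: rect_def mem_box Basis_prod_def)

lemma emeasure_vimage_Complex_rect:
  assumes "a \<le> b"
  shows "emeasure lborel (case_prod Complex -` rect a b) = ennreal (b - a)"
  using assms by (simp add: vimage_Complex_rect emeasure_lborel_box_eq Basis_prod_def prod.insert)

lemma nn_integral_deriv_squared_le_width:
  fixes g :: "complex \<Rightarrow> complex"
  assumes A: "open A" and hol: "g holomorphic_on A" and inj: "inj_on g A"
    and img: "g ` A \<subseteq> rect 0 c" and c: "0 \<le> c"
  shows "(\<integral>\<^sup>+p. ennreal ((cmod (deriv g (case_prod Complex p)))\<^sup>2) * indicator (case_prod Complex -` A) p \<partial>lborel)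
    \<le> ennreal c"
proof -
  have "emeasure lborel (case_prod Complex -` g ` A) \<le> emeasure lborel (case_prod Complex -` rect 0 c)"
    using img by (intro emeasure_mono vimage_mono) (simp_all add: vimage_Complex_rect)
  then show ?thesis
    using c by (simp add: nn_integral_deriv_squared_eq_area[OF A hol inj bounded_subset[OF bounded_rect img]]
        emeasure_vimage_Complex_rect)
qed

text \<open>With the weight c, the pointwise AM-GM bound d \<le> d^2/(2c) + c/2 replaces Cauchy--Schwarz
  in the length--area argument.\<close>
lemma nn_integral_le_am_gm:
  fixes d :: "'a \<Rightarrow> real" and c :: real
  assumes c: "0 < c" and [measurable]: "(\<lambda>p. ennreal ((d p)\<^sup>2) * indicator A p) \<in> borel_measurable M"
    and A: "A \<in> sets M"
  shows "(\<integral>\<^sup>+p. ennreal (d p) * indicator A p \<partial>M)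
    \<le> ennreal (1 / (2 * c)) * (\<integral>\<^sup>+p. ennreal ((d p)\<^sup>2) * indicator A p \<partial>M) + ennreal (c / 2) * emeasure M A"
proof -
  have "ennreal (d p) * indicator A p
      \<le> ennreal (1 / (2 * c)) * (ennreal ((d p)\<^sup>2) * indicator A p) + ennreal (c / 2) * indicator A p" for p
  proof -
    have "d p \<le> 1 / (2 * c) * (d p)\<^sup>2 + c / 2"
      using c sum_squares_bound[of "d p" c] by (simp add: field_simps power2_eq_square)
    then have "ennreal (d p) \<le> ennreal (1 / (2 * c)) * ennreal ((d p)\<^sup>2) + ennreal (c / 2)"
      using c by (simp add: ennreal_plus[symmetric] ennreal_mult[symmetric] ennreal_leI del: ennreal_plus)
    then show ?thesis
      by (simp add: indicator_def)
  qed
  then have "(\<integral>\<^sup>+p. ennreal (d p) * indicator A p \<partial>M)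
      \<le> (\<integral>\<^sup>+p. ennreal (1 / (2 * c)) * (ennreal ((d p)\<^sup>2) * indicator A p) + ennreal (c / 2) * indicator A p \<partial>M)"
    by (rule nn_integral_mono)
  also have "\<dots> = ennreal (1 / (2 * c)) * (\<integral>\<^sup>+p. ennreal ((d p)\<^sup>2) * indicator A p \<partial>M)
      + ennreal (c / 2) * emeasure M A"
    using A by (simp add: nn_integral_add nn_integral_cmult nn_integral_cmult_indicator)
  finally show ?thesis .
qed

lemma nn_integral_pair_ge_sections:
  fixes f :: "real \<times> real \<Rightarrow> ennreal"
  assumes [measurable]: "f \<in> borel_measurable borel"
    and sections: "\<And>x. a < x \<Longrightarrow> x < b \<Longrightarrow> ennreal c \<le> (\<integral>\<^sup>+y. f (x, y) \<partial>lborel)"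
    and "a \<le> b" "0 \<le> c"
  shows "ennreal (c * (b - a)) \<le> (\<integral>\<^sup>+p. f p \<partial>lborel)"
proof -
  have "ennreal (c * (b - a)) = (\<integral>\<^sup>+x. ennreal c * indicator {a<..<b} x \<partial>lborel)"
    using assms(3,4) by (simp add: nn_integral_cmult_indicator ennreal_mult)
  also have "\<dots> \<le> (\<integral>\<^sup>+x. (\<integral>\<^sup>+y. f (x, y) \<partial>lborel) \<partial>lborel)"
    by (intro nn_integral_mono) (auto simp: indicator_def intro: sections)
  also have "\<dots> = (\<integral>\<^sup>+p. f p \<partial>(lborel \<Otimes>\<^sub>M lborel))"
    by (rule lborel.nn_integral_fst) (simp add: lborel_prod)
  also have "\<dots> = (\<integral>\<^sup>+p. f p \<partial>lborel)"
    by (simp add: lborel_prod)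
  finally show ?thesis .
qed

lemma length_area_inequality:
  fixes g :: "complex \<Rightarrow> complex" and a b c :: real
  assumes hol: "g holomorphic_on rect a b" and inj: "inj_on g (rect a b)"
    and img: "g ` rect a b \<subseteq> {w. 0 < Re w \<and> 0 < Im w \<and> Im w < 1}"
    and lim: "\<And>x. a < x \<Longrightarrow> x < b \<Longrightarrow> ((\<lambda>y. Re (g (Complex x y))) \<longlongrightarrow> 0) (at_right 0)"
    and hit: "\<And>x. a < x \<Longrightarrow> x < b \<Longrightarrow> \<exists>y. 0 < y \<and> y < 1 \<and> c \<le> Re (g (Complex x y))"
    and c: "0 < c" and ab: "a < b"
  shows "(b - a) * c \<le> 1"
proof -
  define A where "A = rect a b \<inter> g -` {w. Re w < c}"
  define A' where "A' = case_prod Complex -` A"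
  define d where "d = (\<lambda>p. cmod (deriv g (case_prod Complex p)))"
  have A'_iff: "(x, y) \<in> A' \<longleftrightarrow> a < x \<and> x < b \<and> 0 < y \<and> y < 1 \<and> Re (g (Complex x y)) < c"
    for x y by (simp add: A'_def A_def)
  have "open A"
    unfolding A_def using holomorphic_on_imp_continuous_on[OF hol] open_rect
    by (rule continuous_open_preimage) (intro open_Collect_less continuous_intros)
  then have "open A'"
    unfolding A'_def using continuous_on_case_prod_Complex by (rule open_vimage)
  have holA: "g holomorphic_on A" and injA: "inj_on g A"
    using hol inj by (auto simp: A_def intro: holomorphic_on_subset inj_on_subset)
  have "continuous_on A' d"
    unfolding d_def A'_def
    by (intro continuous_intros continuous_on_compose2[OF holomorphic_on_imp_continuous_on[OF
          holomorphic_deriv[OF holA \<open>open A\<close>]] continuous_on_case_prod_Complex]) auto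
  then have [measurable]: "(\<lambda>p. ennreal (d p) * indicator A' p) \<in> borel_measurable borel"
      "(\<lambda>p. ennreal ((d p)\<^sup>2) * indicator A' p) \<in> borel_measurable borel"
    by (auto intro!: borel_measurable_continuous_on_times_indicator \<open>open A'\<close> continuous_intros)
  have area: "(\<integral>\<^sup>+p. ennreal ((d p)\<^sup>2) * indicator A' p \<partial>lborel) \<le> ennreal c"
    unfolding d_def A'_def using img c
    by (intro nn_integral_deriv_squared_le_width[OF \<open>open A\<close> holA injA]) (auto simp: A_def rect_def)
  have "A' \<subseteq> case_prod Complex -` rect a b"
    by (auto simp: A'_def A_def)
  then have "emeasure lborel A' \<le> emeasure lborel (case_prod Complex -` rect a b)"
    by (rule emeasure_mono) (simp add: vimage_Complex_rect)
  then have measure_A': "emeasure lborel A' \<le> ennreal (b - a)"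
    using ab by (simp add: emeasure_vimage_Complex_rect)
  have "ennreal (c * (b - a)) \<le> (\<integral>\<^sup>+p. ennreal (d p) * indicator A' p \<partial>lborel)"
  proof (rule nn_integral_pair_ge_sections)
    fix x assume x: "a < x" "x < b"
    then obtain y1 where "0 < y1" "y1 < 1" "c \<le> Re (g (Complex x y1))"
      using hit by blast
    with x have "ennreal c \<le> (\<integral>\<^sup>+y. ennreal (cmod (deriv g (Complex x y)))
        * indicator {y. 0 < y \<and> y < 1 \<and> Re (g (Complex x y)) < c} y \<partial>lborel)"
      by (intro vertical_line_length_ge[OF open_rect hol _ lim] c) auto
    with x show "ennreal c \<le> (\<integral>\<^sup>+y. ennreal (d (x, y)) * indicator A' (x, y) \<partial>lborel)"
      by (simp add: d_def A'_iff indicator_def)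
  qed (use ab c in auto)
  also have "\<dots> \<le> ennreal (1 / (2 * c)) * (\<integral>\<^sup>+p. ennreal ((d p)\<^sup>2) * indicator A' p \<partial>lborel)
      + ennreal (c / 2) * emeasure lborel A'"
    using \<open>open A'\<close> by (intro nn_integral_le_am_gm c) auto
  also have "\<dots> \<le> ennreal (1 / (2 * c)) * ennreal c + ennreal (c / 2) * ennreal (b - a)"
    by (intro add_mono mult_left_mono area measure_A') auto
  also have "\<dots> = ennreal (1 / (2 * c) * c + c / 2 * (b - a))"
  proof -
    have "ennreal (1 / (2 * c)) * ennreal c = ennreal (1 / (2 * c) * c)"
      using c by (intro ennreal_mult[symmetric]) auto
    moreover have "ennreal (c / 2) * ennreal (b - a) = ennreal (c / 2 * (b - a))"
      using c ab by (intro ennreal_mult[symmetric]) auto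
    ultimately show ?thesis
      using c ab by (simp only: ennreal_plus[symmetric]) auto
  qed
  also have "1 / (2 * c) * c + c / 2 * (b - a) = 1 / 2 + c * (b - a) / 2"
    using c by (simp add: field_simps)
  finally have "c * (b - a) \<le> 1 / 2 + c * (b - a) / 2"
    using c ab by (subst (asm) ennreal_le_iff) auto
  then show ?thesis
    by (simp add: mult.commute)
qed

section \<open>Ideal markings\<close>

lemma norm_marking_arc: "z \<in> marking_arc p \<theta> k \<Longrightarrow> norm z = 1"
  unfolding marking_arc_def by auto

lemma connected_marking_arc: "connected (marking_arc p \<theta> k)"
  unfolding marking_arc_def by (rule connected_continuous_image) (auto intro!: continuous_intros)

lemma ideal_marking_mono:
  assumes M: "ideal_marking p \<theta>" and "j \<le> k" "k < p"
  shows "\<theta> j \<le> \<theta> k"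
  using assms(2,3)
proof (induction k)
  case (Suc k)
  show ?case
  proof (cases "j = Suc k")
    case False
    then have "\<theta> j \<le> \<theta> k" using Suc by simp
    also have "\<theta> k < \<theta> (Suc k)" using M Suc.prems(2) by (simp add: ideal_marking_def)
    finally show ?thesis by simp
  qed simp
qed simp

lemma ideal_marking_arc_bounds:
  assumes M: "ideal_marking p \<theta>" and k: "k < p"
  shows "\<theta> 0 \<le> \<theta> k" "\<theta> k < next_angle p \<theta> k" "next_angle p \<theta> k \<le> \<theta> 0 + 2 * pi"
proof -
  have last: "\<theta> (p - 1) < \<theta> 0 + 2 * pi" using M by (simp add: ideal_marking_def)
  show "\<theta> 0 \<le> \<theta> k" using ideal_marking_mono[OF M _ k] by simp
  show "\<theta> k < next_angle p \<theta> k"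
  proof (cases "Suc k < p")
    case True then show ?thesis using M k by (simp add: next_angle_def ideal_marking_def)
  next
    case False
    then have "k = p - 1" using k by simp
    then show ?thesis using last k False by (simp add: next_angle_def)
  qed
  show "next_angle p \<theta> k \<le> \<theta> 0 + 2 * pi"
  proof (cases "Suc k < p")
    case True
    then have "\<theta> (Suc k) \<le> \<theta> (p - 1)" using ideal_marking_mono[OF M, of "Suc k" "p - 1"] by simp
    then show ?thesis using True k last by (simp add: next_angle_def)
  qed (use k in \<open>simp add: next_angle_def\<close>)
qed

lemma next_angle_le_later_angle:
  assumes M: "ideal_marking p \<theta>" and "j < k" "k < p"
  shows "next_angle p \<theta> j \<le> \<theta> k"
  using ideal_marking_mono[OF M, of "Suc j" k] assms(2,3) by (simp add: next_angle_def)

lemma cis_eq_cisE: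
  assumes "cis s = cis t"
  obtains n :: int where "s = t + 2 * pi * of_int n"
proof -
  have "exp (\<i> * complex_of_real s) = exp (\<i> * complex_of_real t)"
    using assms by (simp add: cis_conv_exp)
  then obtain n :: int where "\<i> * complex_of_real s = \<i> * complex_of_real t + (of_int (2 * n) * pi) * \<i>"
    unfolding exp_eq by blast
  then have "Im (\<i> * complex_of_real s) = Im (\<i> * complex_of_real t + (of_int (2 * n) * pi) * \<i>)"
    by simp
  then show ?thesis
    by (intro that) simp
qed

lemma cis_notin_other_marking_arc:
  assumes M: "ideal_marking p \<theta>" and j: "j < p" and k: "k < p" and "j \<noteq> k"
    and s: "\<theta> k < s" "s < next_angle p \<theta> k"
  shows "cis s \<notin> marking_arc p \<theta> j"
proof
  assume "cis s \<in> marking_arc p \<theta> j"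
  then obtain t where t: "\<theta> j \<le> t" "t \<le> next_angle p \<theta> j" "cis s = cis t"
    using j by (auto simp: marking_arc_def)
  then obtain n :: int where n: "s = t + 2 * pi * of_int n"
    by (elim cis_eq_cisE)
  have "\<bar>2 * pi * of_int n\<bar> < 2 * pi"
    using n s t ideal_marking_arc_bounds[OF M k] ideal_marking_arc_bounds[OF M j] by auto
  then have "n = 0"
    by (simp add: abs_mult)
  then have "s = t" using n by simp
  then show False
    using \<open>j \<noteq> k\<close> s t next_angle_le_later_angle[OF M _ k, of j] next_angle_le_later_angle[OF M _ j, of k]
    by (cases "j < k") auto
qed

lemma marking_arc_subset_closure:
  assumes M: "ideal_marking p \<theta>" and k: "k < p"
  shows "marking_arc p \<theta> k \<subseteq> closure (cis ` {\<theta> k <..< next_angle p \<theta> k})"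
proof -
  have "cis ` closure {\<theta> k <..< next_angle p \<theta> k} \<subseteq> closure (cis ` {\<theta> k <..< next_angle p \<theta> k})"
    by (rule image_closure_subset[OF _ closed_closure closure_subset]) (intro continuous_intros)
  then show ?thesis
    using ideal_marking_arc_bounds(2)[OF M k] k by (simp add: marking_arc_def)
qed

section \<open>Boundary behaviour of conformal maps of the disc\<close>

lemma boundary_notin_image_ball:
  fixes \<phi> :: "complex \<Rightarrow> complex"
  assumes hol: "\<phi> holomorphic_on ball 0 1" and inj: "inj_on \<phi> (ball 0 1)"
    and cont: "continuous_on (cball 0 1) \<phi>" and \<zeta>: "norm \<zeta> = 1"
  shows "\<phi> \<zeta> \<notin> \<phi> ` ball 0 1"
proof
  assume "\<phi> \<zeta> \<in> \<phi> ` ball 0 1"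
  obtain \<psi> where hol\<psi>: "\<psi> holomorphic_on \<phi> ` ball 0 1" and inv: "\<And>z. z \<in> ball 0 1 \<Longrightarrow> \<psi> (\<phi> z) = z"
    by (rule holomorphic_has_inverse[OF hol open_ball inj]) blast
  define z where "z = (\<lambda>k::nat. (1 - inverse (real (Suc k))) *\<^sub>R \<zeta>)"
  have z_ball: "z k \<in> ball 0 1" for k
  proof -
    have "0 < inverse (real (Suc k))" "inverse (real (Suc k)) \<le> 1"
      by (auto simp: inverse_le_1_iff)
    then show ?thesis using \<zeta> by (simp add: z_def)
  qed
  have "(\<lambda>k::nat. (1 - inverse (real (Suc k))) *\<^sub>R \<zeta>) \<longlonglongrightarrow> (1 - 0) *\<^sub>R \<zeta>"
    by (intro tendsto_intros LIMSEQ_inverse_real_of_nat)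
  then have z_lim: "z \<longlonglongrightarrow> \<zeta>" by (simp add: z_def)
  have "(\<lambda>k. \<phi> (z k)) \<longlonglongrightarrow> \<phi> \<zeta>"
    by (rule continuous_on_tendsto_compose[OF cont z_lim])
      (use \<zeta> z_ball in \<open>auto intro!: always_eventually less_imp_le\<close>)
  moreover have "isCont \<psi> (\<phi> \<zeta>)"
    using holomorphic_on_imp_continuous_on[OF hol\<psi>] open_mapping_thm3[OF hol open_ball inj]
      \<open>\<phi> \<zeta> \<in> \<phi> ` ball 0 1\<close> continuous_on_eq_continuous_at by blast
  ultimately have "(\<lambda>k. \<psi> (\<phi> (z k))) \<longlonglongrightarrow> \<psi> (\<phi> \<zeta>)"
    using isCont_tendsto_compose by blast
  then have "z \<longlonglongrightarrow> \<psi> (\<phi> \<zeta>)"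
    using inv z_ball by simp
  then have "\<psi> (\<phi> \<zeta>) = \<zeta>"
    using z_lim LIMSEQ_unique by blast
  moreover have "\<psi> (\<phi> \<zeta>) \<in> ball 0 1"
    using \<open>\<phi> \<zeta> \<in> \<phi> ` ball 0 1\<close> inv by auto
  ultimately show False
    using \<zeta> by simp
qed

text \<open>Schwarz reflection across the real axis followed by the open mapping theorem.\<close>
lemma upper_half_disc_covered:
  fixes f :: "complex \<Rightarrow> complex" and t \<rho> :: real
  defines "S \<equiv> ball (complex_of_real t) \<rho>"
  assumes hol: "f holomorphic_on (S \<inter> {z. 0 < Im z})"
    and cont: "continuous_on (S \<inter> {z. 0 \<le> Im z}) f"
    and real: "\<And>z. z \<in> S \<Longrightarrow> Im z = 0 \<Longrightarrow> Im (f z) = 0"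
    and upper: "\<And>z. z \<in> S \<Longrightarrow> 0 < Im z \<Longrightarrow> 0 < Im (f z)"
    and nonconst: "\<not> f constant_on (S \<inter> {z. 0 < Im z})" and \<rho>: "0 < \<rho>"
  obtains s where "0 < s"
    "\<And>q. 0 < Im q \<Longrightarrow> cmod (q - f t) < s \<Longrightarrow> \<exists>u\<in>S. 0 < Im u \<and> f u = q"
proof -
  define \<Psi> where "\<Psi> = (\<lambda>z. if 0 \<le> Im z then f z else cnj (f (cnj z)))"
  have "cnj ` S \<subseteq> S"
    by (auto simp: S_def dist_norm) (metis complex_cnj_complex_of_real complex_cnj_diff complex_mod_cnj)
  then have hol\<Psi>: "\<Psi> holomorphic_on S"
    unfolding \<Psi>_def using hol cont real
    by (intro Schwarz_reflection) (auto simp: S_def complex_is_Real_iff)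
  have "\<not> \<Psi> constant_on S"
  proof
    assume "\<Psi> constant_on S"
    then obtain k where k: "\<And>z. z \<in> S \<Longrightarrow> \<Psi> z = k"
      unfolding constant_on_def by blast
    have "f z = k" if "z \<in> S \<inter> {z. 0 < Im z}" for z
      using k[of z] that by (simp add: \<Psi>_def)
    then show False
      using nonconst unfolding constant_on_def by blast
  qed
  then have "open (\<Psi> ` S)"
    by (intro open_mapping_thm[OF hol\<Psi>]) (auto simp: S_def)
  moreover have "f t \<in> \<Psi> ` S"
    using \<rho> by (auto simp: S_def \<Psi>_def intro!: image_eqI[of _ _ "complex_of_real t"])
  ultimately obtain s where s: "0 < s" "ball (f t) s \<subseteq> \<Psi> ` S"
    unfolding open_contains_ball by blast
  show thesis
  proof (rule that[OF s(1)])
    fix q assume q: "0 < Im q" "cmod (q - f t) < s"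
    then have "q \<in> ball (f t) s" by (simp add: dist_norm norm_minus_commute)
    then obtain u where u: "u \<in> S" "q = \<Psi> u" using s(2) by auto
    have "0 < Im u"
    proof (rule ccontr)
      assume "\<not> 0 < Im u"
      then consider "Im u < 0" | "Im u = 0" by linarith
      then show False
      proof cases
        case 1
        then have "0 < Im (f (cnj u))"
          using upper \<open>cnj ` S \<subseteq> S\<close> u(1) by auto
        then show False using q(1) u(2) 1 by (simp add: \<Psi>_def)
      next
        case 2
        then show False using q(1) u real by (simp add: \<Psi>_def)
      qed
    qed
    then show "\<exists>u\<in>S. 0 < Im u \<and> f u = q"
      using u by (auto simp: \<Psi>_def)
  qed
qed

lemma quad_mapD:
  assumes "quad_map p \<theta> m n \<phi> W"
  shows "0 < W" "\<phi> holomorphic_on ball 0 1" "inj_on \<phi> (ball 0 1)" "\<phi> ` ball 0 1 = rect 0 W"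
    "continuous_on (cball 0 1) \<phi>"
    "\<phi> ` marking_arc p \<theta> m = {z. 0 \<le> Re z \<and> Re z \<le> W \<and> Im z = 0}"
    "\<phi> ` marking_arc p \<theta> n = {z. 0 \<le> Re z \<and> Re z \<le> W \<and> Im z = 1}"
  using assms unfolding quad_map_def rect_def by auto

lemma quad_map_inverse:
  assumes Q: "quad_map p \<theta> m n \<phi> W"
  obtains \<psi> where "\<psi> holomorphic_on rect 0 W" "\<And>z. z \<in> ball 0 1 \<Longrightarrow> \<psi> (\<phi> z) = z"
    "\<And>u. u \<in> rect 0 W \<Longrightarrow> \<psi> u \<in> ball 0 1 \<and> \<phi> (\<psi> u) = u"
proof -
  obtain \<psi> where "\<psi> holomorphic_on \<phi> ` ball 0 1" "\<And>z. z \<in> ball 0 1 \<Longrightarrow> \<psi> (\<phi> z) = z"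
    by (rule holomorphic_has_inverse[OF quad_mapD(2)[OF Q] open_ball quad_mapD(3)[OF Q]]) blast
  with quad_mapD(4)[OF Q] show thesis
    by (intro that[of \<psi>]) (auto simp flip: quad_mapD(4)[OF Q])
qed

lemma quad_map_cball:
  assumes Q: "quad_map p \<theta> m n \<phi> W" and w: "norm w \<le> 1"
  shows "0 \<le> Re (\<phi> w) \<and> Re (\<phi> w) \<le> W \<and> 0 \<le> Im (\<phi> w) \<and> Im (\<phi> w) \<le> 1"
proof -
  define T where "T = {z. 0 \<le> Re z \<and> Re z \<le> W \<and> 0 \<le> Im z \<and> Im z \<le> 1}"
  have "closed T"
    unfolding T_def by (intro closed_Collect_conj closed_Collect_le continuous_intros)
  moreover have "\<phi> ` ball 0 1 \<subseteq> T"
    using quad_mapD(4)[OF Q] by (auto simp: rect_def T_def)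
  ultimately have "\<phi> ` closure (ball 0 1) \<subseteq> T"
    using image_closure_subset quad_mapD(5)[OF Q] by (metis closure_ball zero_less_one)
  then have "\<phi> w \<in> T"
    using w by (simp add: image_subset_iff)
  then show ?thesis
    by (simp add: T_def)
qed

lemma quad_map_sphere_notin_rect:
  assumes Q: "quad_map p \<theta> m n \<phi> W" and "norm \<zeta> = 1"
  shows "\<phi> \<zeta> \<notin> rect 0 W"
  using boundary_notin_image_ball[OF quad_mapD(2,3,5)[OF Q] assms(2)] quad_mapD(4)[OF Q] by simp

lemma quad_map_sphere_near_bottom_real:
  assumes Q: "quad_map p \<theta> m n \<phi> W" and \<zeta>: "norm \<zeta> = 1"
    and x: "\<phi> \<zeta> = of_real x" "0 < x" "x < W"
  obtains \<rho> where "0 < \<rho>" "\<And>w. norm w = 1 \<Longrightarrow> dist w \<zeta> < \<rho> \<Longrightarrow> Im (\<phi> w) = 0"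
proof -
  define \<mu> where "\<mu> = min (min x (W - x)) 1"
  have "0 < \<mu>" using x by (simp add: \<mu>_def)
  then obtain \<rho> where \<rho>: "0 < \<rho>"
    "\<And>w. w \<in> cball 0 1 \<Longrightarrow> dist w \<zeta> < \<rho> \<Longrightarrow> dist (\<phi> w) (\<phi> \<zeta>) < \<mu>"
    using quad_mapD(5)[OF Q] \<zeta> unfolding continuous_on_iff by (metis mem_cball_0 order_refl)
  show thesis
  proof (rule that[OF \<rho>(1)])
    fix w assume w: "norm w = 1" "dist w \<zeta> < \<rho>"
    then have "\<bar>Re (\<phi> w) - x\<bar> < \<mu>" "\<bar>Im (\<phi> w)\<bar> < \<mu>"
      using \<rho>(2)[of w] x(1) abs_Re_le_cmod[of "\<phi> w - of_real x"] abs_Im_le_cmod[of "\<phi> w - of_real x"]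
      by (auto simp: dist_norm)
    moreover have "0 \<le> Im (\<phi> w)"
      using quad_map_cball[OF Q] w(1) by simp
    ultimately show "Im (\<phi> w) = 0"
      using quad_map_sphere_notin_rect[OF Q w(1)] by (auto simp: rect_def \<mu>_def)
  qed
qed

lemma not_constant_on_upper_half_ball:
  fixes \<phi> :: "complex \<Rightarrow> complex"
  assumes inj: "inj_on \<phi> (ball 0 1)" and \<rho>: "0 < \<rho>"
  shows "\<not> (\<phi> \<circ> (\<lambda>t. exp (\<i> * t))) constant_on (ball (complex_of_real t) \<rho> \<inter> {z. 0 < Im z})"
proof
  define za where "za = complex_of_real t + \<i> * of_real (\<rho> / 2)"
  define zb where "zb = complex_of_real t + \<i> * of_real (\<rho> / 4)"
  assume "(\<phi> \<circ> (\<lambda>t. exp (\<i> * t))) constant_on (ball (complex_of_real t) \<rho> \<inter> {z. 0 < Im z})"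
  moreover have "za \<in> ball (complex_of_real t) \<rho> \<inter> {z. 0 < Im z}" "zb \<in> ball (complex_of_real t) \<rho> \<inter> {z. 0 < Im z}"
    using \<rho> by (simp_all add: za_def zb_def dist_norm norm_mult)
  ultimately have "\<phi> (exp (\<i> * za)) = \<phi> (exp (\<i> * zb))"
    unfolding constant_on_def by (metis comp_apply)
  moreover have "exp (\<i> * za) \<in> ball 0 1" "exp (\<i> * zb) \<in> ball 0 1"
    using \<rho> by (simp_all add: za_def zb_def)
  ultimately have "norm (exp (\<i> * za)) = norm (exp (\<i> * zb))"
    using inj by (metis inj_on_def)
  then show False
    using \<rho> by (simp add: za_def zb_def)
qed

text \<open>In the coordinate exp (\<i> t) the unit circle becomes the real axis, and near \<zeta> it is
  sent into the real axis, so Schwarz reflection applies.\<close>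
lemma quad_map_covers_near_bottom:
  assumes Q: "quad_map p \<theta> m n \<phi> W" and \<zeta>: "norm \<zeta> = 1"
    and x: "\<phi> \<zeta> = of_real x" "0 < x" "x < W" and r: "0 < r"
  obtains s where "0 < s"
    "\<And>q. 0 < Im q \<Longrightarrow> cmod (q - of_real x) < s \<Longrightarrow> \<exists>z\<in>ball 0 1. cmod (z - \<zeta>) < r \<and> \<phi> z = q"
proof -
  note hol = quad_mapD(2)[OF Q] and inj = quad_mapD(3)[OF Q] and img = quad_mapD(4)[OF Q]
    and cont = quad_mapD(5)[OF Q]
  obtain \<rho>0 where \<rho>0: "0 < \<rho>0" "\<And>w. norm w = 1 \<Longrightarrow> dist w \<zeta> < \<rho>0 \<Longrightarrow> Im (\<phi> w) = 0"
    by (rule quad_map_sphere_near_bottom_real[OF Q \<zeta> x]) blast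
  define E where "E = (\<lambda>t::complex. exp (\<i> * t))"
  have normE: "norm (E t) = exp (- Im t)" for t
    by (simp add: E_def)
  define t1 where "t1 = Arg \<zeta>"
  have "E (of_real t1) = \<zeta>"
  proof -
    have "cis t1 = sgn \<zeta>"
      unfolding t1_def by (rule cis_Arg) (use \<zeta> in auto)
    also have "sgn \<zeta> = \<zeta>"
      using \<zeta> by (simp add: sgn_div_norm)
    finally show ?thesis
      by (simp add: E_def cis_conv_exp)
  qed
  moreover have "continuous_on UNIV E"
    unfolding E_def by (intro continuous_intros)
  ultimately obtain \<rho> where \<rho>: "\<rho> > 0" "\<And>t. dist t (of_real t1) < \<rho> \<Longrightarrow> dist (E t) \<zeta> < min \<rho>0 r"
    using \<rho>0(1) r unfolding continuous_on_iff by (metis UNIV_I min_less_iff_conj)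
  define S where "S = ball (complex_of_real t1) \<rho>"
  define f where "f = \<phi> \<circ> E"
  have E_ball: "E t \<in> ball 0 1" if "0 < Im t" for t
    using that by (simp add: normE)
  obtain s where s: "0 < s" "\<And>q. 0 < Im q \<Longrightarrow> cmod (q - f t1) < s \<Longrightarrow> \<exists>u\<in>S. 0 < Im u \<and> f u = q"
  proof (rule upper_half_disc_covered[of f t1 \<rho>, folded S_def])
    have "E holomorphic_on (S \<inter> {z. 0 < Im z})"
      unfolding E_def by (intro holomorphic_intros)
    then show "f holomorphic_on (S \<inter> {z. 0 < Im z})"
      unfolding f_def using E_ball by (intro holomorphic_on_compose_gen[OF _ hol]) auto
    show "continuous_on (S \<inter> {z. 0 \<le> Im z}) f"
      unfolding f_def
      by (intro continuous_on_compose continuous_on_subset[OF \<open>continuous_on UNIV E\<close>]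
          continuous_on_subset[OF cont]) (auto simp: normE)
    show "Im (f t) = 0" if "t \<in> S" "Im t = 0" for t
      using \<rho>0(2)[of "E t"] \<rho>(2)[of t] that by (simp add: f_def normE S_def dist_commute)
    show "0 < Im (f t)" if "t \<in> S" "0 < Im t" for t
      using img E_ball[OF that(2)] by (auto simp: f_def rect_def)
    show "\<not> f constant_on (S \<inter> {z. 0 < Im z})"
      unfolding f_def E_def S_def by (rule not_constant_on_upper_half_ball[OF inj \<rho>(1)])
  qed (use \<rho> in auto)
  show thesis
  proof (rule that[OF s(1)])
    fix q assume "0 < Im q" "cmod (q - of_real x) < s"
    moreover have "f t1 = of_real x"
      using \<open>E (of_real t1) = \<zeta>\<close> x(1) by (simp add: f_def)
    ultimately obtain u where "u \<in> S" "0 < Im u" "f u = q"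
      using s(2) by auto
    then show "\<exists>z\<in>ball 0 1. cmod (z - \<zeta>) < r \<and> \<phi> z = q"
      using E_ball \<rho>(2)[of u] by (intro bexI[of _ "E u"]) (auto simp: S_def f_def dist_norm norm_minus_commute)
  qed
qed

lemma quad_map_bottom_unique:
  assumes Q: "quad_map p \<theta> m n \<phi> W" and "norm \<zeta>1 = 1" "norm \<zeta>2 = 1"
    and "\<phi> \<zeta>1 = of_real x" "\<phi> \<zeta>2 = of_real x" and x: "0 < x" "x < W"
  shows "\<zeta>1 = \<zeta>2"
proof (rule ccontr)
  assume "\<zeta>1 \<noteq> \<zeta>2"
  define r where "r = cmod (\<zeta>1 - \<zeta>2) / 2"
  have "0 < r" using \<open>\<zeta>1 \<noteq> \<zeta>2\<close> by (simp add: r_def)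
  obtain s1 where s1: "0 < s1" "\<And>q. 0 < Im q \<Longrightarrow> cmod (q - of_real x) < s1 \<Longrightarrow>
      \<exists>z\<in>ball 0 1. cmod (z - \<zeta>1) < r \<and> \<phi> z = q"
    using quad_map_covers_near_bottom[OF Q assms(2,4) x \<open>0 < r\<close>] by blast
  obtain s2 where s2: "0 < s2" "\<And>q. 0 < Im q \<Longrightarrow> cmod (q - of_real x) < s2 \<Longrightarrow>
      \<exists>z\<in>ball 0 1. cmod (z - \<zeta>2) < r \<and> \<phi> z = q"
    using quad_map_covers_near_bottom[OF Q assms(3,5) x \<open>0 < r\<close>] by blast
  define q where "q = of_real x + \<i> * of_real (min s1 s2 / 2)"
  have "0 < Im q" "cmod (q - of_real x) < s1" "cmod (q - of_real x) < s2"
    using s1(1) s2(1) by (auto simp: q_def norm_mult)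
  then obtain w1 w2 where w1: "w1 \<in> ball 0 1" "cmod (w1 - \<zeta>1) < r" "\<phi> w1 = q"
    and w2: "w2 \<in> ball 0 1" "cmod (w2 - \<zeta>2) < r" "\<phi> w2 = q"
    using s1(2) s2(2) by meson
  have "w1 = w2"
    using quad_mapD(3)[OF Q] w1 w2 by (simp add: inj_on_def)
  then have "cmod (\<zeta>1 - \<zeta>2) < 2 * r"
    using w1(2) w2(2) norm_triangle_lt[of "\<zeta>1 - w1" "w2 - \<zeta>2" "2 * r"]
    by (simp add: norm_minus_commute)
  then show False
    by (simp add: r_def)
qed

lemma quad_map_inverse_vertical_tendsto:
  assumes Q: "quad_map p \<theta> m n \<phi> W" and x: "0 < x" "x < W"
    and inv: "\<And>u. u \<in> rect 0 W \<Longrightarrow> \<psi> u \<in> ball 0 1 \<and> \<phi> (\<psi> u) = u"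
    and \<zeta>: "norm \<zeta> = 1" and \<zeta>\<phi>: "\<phi> \<zeta> = of_real x"
  shows "((\<lambda>y. \<psi> (Complex x y)) \<longlongrightarrow> \<zeta>) (at_right 0)"
proof (rule tendstoI)
  fix \<epsilon> :: real assume "0 < \<epsilon>"
  define K where "K = cball (0::complex) 1 - ball \<zeta> \<epsilon>"
  have "compact K"
    unfolding K_def by (intro compact_diff) auto
  have far: "\<phi> z \<noteq> of_real x" if "z \<in> K" for z
  proof
    assume "\<phi> z = of_real x"
    moreover have "norm z = 1"
    proof -
      have "\<phi> z \<notin> rect 0 W"
        using \<open>\<phi> z = of_real x\<close> by (simp add: rect_def)
      then have "z \<notin> ball 0 1"
        using quad_mapD(4)[OF Q] by blast
      then show ?thesis
        using that by (simp add: K_def)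
    qed
    ultimately have "z = \<zeta>"
      using quad_map_bottom_unique[OF Q _ \<zeta> _ \<zeta>\<phi> x] by simp
    then show False
      using that \<open>0 < \<epsilon>\<close> by (simp add: K_def)
  qed
  have cont: "continuous_on K (\<lambda>z. cmod (\<phi> z - of_real x))"
    by (intro continuous_intros continuous_on_subset[OF quad_mapD(5)[OF Q]]) (auto simp: K_def)
  obtain \<mu> where \<mu>: "0 < \<mu>" "\<And>z. z \<in> K \<Longrightarrow> \<mu> \<le> cmod (\<phi> z - of_real x)"
  proof (cases "K = {}")
    case False
    then obtain z0 where "z0 \<in> K" "\<And>z. z \<in> K \<Longrightarrow> cmod (\<phi> z0 - of_real x) \<le> cmod (\<phi> z - of_real x)"
      using continuous_attains_inf[OF \<open>compact K\<close> False cont] by blast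
    with far show thesis
      by (intro that[of "cmod (\<phi> z0 - of_real x)"]) auto
  qed (use that[of 1] in simp)
  show "\<forall>\<^sub>F y in at_right 0. dist (\<psi> (Complex x y)) \<zeta> < \<epsilon>"
    unfolding eventually_at_right_field
  proof (intro exI[of _ "min \<mu> 1"] conjI allI impI)
    fix y :: real assume y: "0 < y" "y < min \<mu> 1"
    then have w: "\<psi> (Complex x y) \<in> ball 0 1" "\<phi> (\<psi> (Complex x y)) = Complex x y"
      using inv[of "Complex x y"] x by auto
    then have "cmod (\<phi> (\<psi> (Complex x y)) - of_real x) = y"
      using y by (simp add: Complex_eq norm_mult)
    then have "\<psi> (Complex x y) \<notin> K"
      using \<mu>(2) y by force
    then show "dist (\<psi> (Complex x y)) \<zeta> < \<epsilon>"
      using w(1) by (simp add: K_def dist_commute)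
  qed (use \<mu> in simp)
qed

lemma quad_map_vertical_tendsto:
  assumes Q: "quad_map p \<theta> m n \<phi> W" and x: "0 < x" "x < W"
    and inv: "\<And>u. u \<in> rect 0 W \<Longrightarrow> \<psi> u \<in> ball 0 1 \<and> \<phi> (\<psi> u) = u"
    and h: "continuous_on (cball 0 1) h"
  obtains \<zeta> where "\<zeta> \<in> marking_arc p \<theta> m" "((\<lambda>y. h (\<psi> (Complex x y))) \<longlongrightarrow> h \<zeta>) (at_right 0)"
proof -
  have "of_real x \<in> \<phi> ` marking_arc p \<theta> m"
    using quad_mapD(6)[OF Q] x by simp
  then obtain \<zeta> where \<zeta>: "\<zeta> \<in> marking_arc p \<theta> m" "\<phi> \<zeta> = of_real x"
    by auto
  have "((\<lambda>y. \<psi> (Complex x y)) \<longlongrightarrow> \<zeta>) (at_right 0)"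
    by (rule quad_map_inverse_vertical_tendsto[OF Q x inv norm_marking_arc[OF \<zeta>(1)] \<zeta>(2)])
  moreover have "\<forall>\<^sub>F y in at_right 0. \<psi> (Complex x y) \<in> cball 0 1"
    unfolding eventually_at_right_field
    using inv x by (intro exI[of _ 1]) (auto intro: less_imp_le)
  ultimately have "((\<lambda>y. h (\<psi> (Complex x y))) \<longlongrightarrow> h \<zeta>) (at_right 0)"
    by (intro continuous_on_tendsto_compose[OF h]) (use norm_marking_arc[OF \<zeta>(1)] in auto)
  with \<zeta>(1) show thesis
    by (rule that)
qed

lemma half_turn_in_rect [simp]: "of_real W + \<i> - u \<in> rect 0 W \<longleftrightarrow> u \<in> rect 0 W"
  by (auto simp: rect_def)

lemma quad_map_swap:
  assumes Q: "quad_map p \<theta> m n \<phi> W"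
  shows "quad_map p \<theta> n m (\<lambda>z. of_real W + \<i> - \<phi> z) W"
proof -
  define \<rho> where "\<rho> = (\<lambda>w::complex. of_real W + \<i> - w)"
  have \<rho>_image: "\<rho> ` X = Y" if "\<And>w. w \<in> X \<Longrightarrow> \<rho> w \<in> Y" "\<And>w. w \<in> Y \<Longrightarrow> \<rho> w \<in> X" for X Y
  proof
    show "Y \<subseteq> \<rho> ` X"
      using that(2) by (force simp: \<rho>_def intro: image_eqI[of _ _ "\<rho> _"])
  qed (use that(1) in auto)
  have [simp]: "(\<lambda>z. of_real W + \<i> - \<phi> z) ` A = \<rho> ` \<phi> ` A" for A
    by (simp add: \<rho>_def image_image)
  have "\<rho> ` rect 0 W = rect 0 W"
    by (rule \<rho>_image) (simp_all add: \<rho>_def)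
  moreover have "\<rho> ` {z. 0 \<le> Re z \<and> Re z \<le> W \<and> Im z = 1} = {z. 0 \<le> Re z \<and> Re z \<le> W \<and> Im z = 0}"
    "\<rho> ` {z. 0 \<le> Re z \<and> Re z \<le> W \<and> Im z = 0} = {z. 0 \<le> Re z \<and> Re z \<le> W \<and> Im z = 1}"
    by (rule \<rho>_image; auto simp: \<rho>_def)+
  ultimately show ?thesis
    using quad_mapD[OF Q] unfolding quad_map_def
    by (intro conjI holomorphic_intros continuous_intros) (auto simp: rect_def inj_on_def)
qed

lemma quad_map_other_arc_not_bottom:
  assumes Q: "quad_map p \<theta> m n \<phi> W" and M: "ideal_marking p \<theta>"
    and "m < p" "k < p" "k \<noteq> m" and s: "\<theta> k < s" "s < next_angle p \<theta> k"
    and "Im (\<phi> (cis s)) = 0"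
  shows "Re (\<phi> (cis s)) \<le> 0 \<or> W \<le> Re (\<phi> (cis s))"
proof (rule ccontr)
  define x where "x = Re (\<phi> (cis s))"
  assume "\<not> (Re (\<phi> (cis s)) \<le> 0 \<or> W \<le> Re (\<phi> (cis s)))"
  then have x: "0 < x" "x < W" by (auto simp: x_def)
  have "\<phi> (cis s) = of_real x"
    using \<open>Im (\<phi> (cis s)) = 0\<close> by (simp add: x_def complex_eq_iff)
  moreover have "of_real x \<in> \<phi> ` marking_arc p \<theta> m"
    using quad_mapD(6)[OF Q] x by simp
  then obtain \<zeta> where "\<zeta> \<in> marking_arc p \<theta> m" "\<phi> \<zeta> = of_real x"
    by auto
  ultimately have "cis s = \<zeta>"
    using quad_map_bottom_unique[OF Q _ norm_marking_arc _ _ x] by auto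
  then show False
    using cis_notin_other_marking_arc[OF M assms(3,4) assms(5)[symmetric] s]
      \<open>\<zeta> \<in> marking_arc p \<theta> m\<close> by simp
qed

lemma quad_map_other_arc_vertical_side:
  assumes Q: "quad_map p \<theta> m n \<phi> W" and M: "ideal_marking p \<theta>"
    and m: "m < p" and n: "n < p" and k: "k < p" and "k \<noteq> m" "k \<noteq> n"
  shows "(\<forall>z\<in>marking_arc p \<theta> k. Re (\<phi> z) = 0) \<or> (\<forall>z\<in>marking_arc p \<theta> k. Re (\<phi> z) = W)"
proof -
  note Q' = quad_map_swap[OF Q]
  define A where "A = {z::complex. Re z = 0 \<and> 0 \<le> Im z \<and> Im z \<le> 1}"
  define B where "B = {z::complex. Re z = W \<and> 0 \<le> Im z \<and> Im z \<le> 1}"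
  have "closed A" "closed B"
    unfolding A_def B_def by (intro closed_Collect_conj closed_Collect_eq closed_Collect_le continuous_intros)+
  have "\<phi> (cis s) \<in> A \<union> B" if s: "\<theta> k < s" "s < next_angle p \<theta> k" for s
  proof -
    have "norm (cis s) = 1" by simp
    then have "0 \<le> Re (\<phi> (cis s))" "Re (\<phi> (cis s)) \<le> W" "0 \<le> Im (\<phi> (cis s))" "Im (\<phi> (cis s)) \<le> 1"
      "\<phi> (cis s) \<notin> rect 0 W"
      using quad_map_cball[OF Q, of "cis s"] quad_map_sphere_notin_rect[OF Q] by auto
    moreover have "Im (\<phi> (cis s)) = 0 \<Longrightarrow> Re (\<phi> (cis s)) \<le> 0 \<or> W \<le> Re (\<phi> (cis s))"
      using quad_map_other_arc_not_bottom[OF Q M m k \<open>k \<noteq> m\<close> s] by blast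
    moreover have "Im (\<phi> (cis s)) = 1 \<Longrightarrow> Re (\<phi> (cis s)) \<le> 0 \<or> W \<le> Re (\<phi> (cis s))"
      using quad_map_other_arc_not_bottom[OF Q' M n k \<open>k \<noteq> n\<close> s] by auto
    ultimately show ?thesis
      by (auto simp: A_def B_def rect_def)
  qed
  then have "\<phi> ` cis ` {\<theta> k <..< next_angle p \<theta> k} \<subseteq> A \<union> B"
    by (simp add: image_subset_iff)
  moreover have "closure (cis ` {\<theta> k <..< next_angle p \<theta> k}) \<subseteq> cball 0 1"
    by (rule closure_minimal) auto
  ultimately have "\<phi> ` closure (cis ` {\<theta> k <..< next_angle p \<theta> k}) \<subseteq> A \<union> B"
    by (intro image_closure_subset continuous_on_subset[OF quad_mapD(5)[OF Q]]
        closed_Un \<open>closed A\<close> \<open>closed B\<close>)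
  then have "\<phi> ` marking_arc p \<theta> k \<subseteq> A \<union> B"
    using marking_arc_subset_closure[OF M k] by blast
  moreover have "connected (\<phi> ` marking_arc p \<theta> k)"
    by (intro connected_continuous_image[OF _ connected_marking_arc]
        continuous_on_subset[OF quad_mapD(5)[OF Q]]) (auto dest: norm_marking_arc)
  moreover have "A \<inter> B = {}"
    using quad_mapD(1)[OF Q] by (auto simp: A_def B_def)
  ultimately have "\<phi> ` marking_arc p \<theta> k \<subseteq> A \<or> \<phi> ` marking_arc p \<theta> k \<subseteq> B"
    using \<open>closed A\<close> \<open>closed B\<close> unfolding connected_closed by blast
  then show ?thesis
    by (auto simp: A_def B_def)
qed

lemma quad_map_indices_distinct:
  assumes "quad_map p \<theta> m n \<phi> W"
  shows "m \<noteq> n"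
proof
  assume "m = n"
  then have "{z. 0 \<le> Re z \<and> Re z \<le> W \<and> Im z = 0} = {z. 0 \<le> Re z \<and> Re z \<le> W \<and> Im z = 1}"
    using quad_mapD(6,7)[OF assms] by simp
  moreover have "(0::complex) \<in> {z. 0 \<le> Re z \<and> Re z \<le> W \<and> Im z = 0}"
    using quad_mapD(1)[OF assms] by simp
  ultimately show False
    by auto
qed

lemma truncated_quad_swap:
  "truncated_quad (\<lambda>z. of_real W + \<i> - \<phi> z) W = truncated_quad \<phi> W"
  by (auto simp: truncated_quad_def)

section \<open>Disjointness of truncated quadrilaterals\<close>

lemma length_area_contradiction:
  fixes g :: "complex \<Rightarrow> complex" and a b c L W' :: real
  assumes hol: "g holomorphic_on rect a b" and inj: "inj_on g (rect a b)"
    and img: "g ` rect a b \<subseteq> rect 0 W'"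
    and lim: "\<And>x. a < x \<Longrightarrow> x < b \<Longrightarrow> ((\<lambda>y. Re (g (Complex x y))) \<longlongrightarrow> L) (at_right 0)"
    and L: "L = 0 \<or> L = W'"
    and hit: "\<And>x. a < x \<Longrightarrow> x < b \<Longrightarrow> \<exists>y. 0 < y \<and> y < 1 \<and> Re (g (Complex x y)) = c"
    and ab: "1 < b - a" and c: "1 < c" "c < W' - 1"
  shows False
proof -
  have impossible: False if hyp: "h holomorphic_on rect a b" "inj_on h (rect a b)" "h ` rect a b \<subseteq> rect 0 W'"
    "\<And>x. a < x \<Longrightarrow> x < b \<Longrightarrow> ((\<lambda>y. Re (h (Complex x y))) \<longlongrightarrow> 0) (at_right 0)"
    "\<And>x. a < x \<Longrightarrow> x < b \<Longrightarrow> \<exists>y. 0 < y \<and> y < 1 \<and> Re (h (Complex x y)) = d" "1 < d"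
  for h d
  proof -
    have "(b - a) * d \<le> 1"
    proof (rule length_area_inequality[OF hyp(1,2) _ hyp(4)])
      show "h ` rect a b \<subseteq> {w. 0 < Re w \<and> 0 < Im w \<and> Im w < 1}"
        using hyp(3) by (auto simp: rect_def)
      show "\<exists>y. 0 < y \<and> y < 1 \<and> d \<le> Re (h (Complex x y))" if "a < x" "x < b" for x
        using hyp(5)[OF that] by force
    qed (use ab \<open>1 < d\<close> in auto)
    moreover have "1 * 1 < (b - a) * d"
      using ab \<open>1 < d\<close> by (intro mult_strict_mono) auto
    ultimately show False
      by simp
  qed
  from L show False
  proof
    assume "L = 0"
    then show False
      using impossible[OF hol inj img _ hit c(1)] lim by simp
  next
    assume "L = W'"
    let ?h = "\<lambda>w. of_real W' + \<i> - g w"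
    show False
    proof (rule impossible[of ?h "W' - c"])
      show "?h holomorphic_on rect a b"
        using hol by (intro holomorphic_intros)
      show "inj_on ?h (rect a b)"
        using inj by (simp add: inj_on_def)
      show "?h ` rect a b \<subseteq> rect 0 W'"
        using img by auto
      show "((\<lambda>y. Re (?h (Complex x y))) \<longlongrightarrow> 0) (at_right 0)" if "a < x" "x < b" for x
        using tendsto_diff[OF tendsto_const[of W'] lim[OF that]] \<open>L = W'\<close> by simp
      show "\<exists>y. 0 < y \<and> y < 1 \<and> Re (?h (Complex x y)) = W' - c" if "a < x" "x < b" for x
        using hit[OF that] by auto
    qed (use c in auto)
  qed
qed

lemma IVT_at_right:
  fixes f :: "real \<Rightarrow> real"
  assumes lim: "(f \<longlongrightarrow> L) (at_right a)" and cont: "continuous_on {a<..b} f" and "a < b"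
    and x: "min L (f b) < x" "x < max L (f b)"
  obtains y where "a < y" "y \<le> b" "f y = x"
proof -
  have "0 < \<bar>x - L\<bar>"
    using x by auto
  from tendstoD[OF lim this] obtain d where d: "a < d" "\<And>y. a < y \<Longrightarrow> y < d \<Longrightarrow> dist (f y) L < \<bar>x - L\<bar>"
    unfolding eventually_at_right_field by blast
  define \<delta> where "\<delta> = (a + min d b) / 2"
  have \<delta>: "a < \<delta>" "\<delta> < b" "\<delta> < d"
    using d \<open>a < b\<close> by (auto simp: \<delta>_def)
  have close: "\<bar>f \<delta> - L\<bar> < \<bar>x - L\<bar>"
    using d(2)[OF \<delta>(1,3)] by (simp add: dist_real_def)
  have cont': "continuous_on {\<delta>..b} f"
    using \<delta>(1) by (intro continuous_on_subset[OF cont]) auto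
  show thesis
  proof (cases "L < f b")
    case True
    with x close have "f \<delta> \<le> x" "x \<le> f b"
      by auto
    then obtain y where "\<delta> \<le> y" "y \<le> b" "f y = x"
      using IVT'[of f \<delta> x b] cont' \<delta> by auto
    with \<delta> show thesis
      by (intro that[of y]) auto
  next
    case False
    with x close have "x \<le> f \<delta>" "f b \<le> x"
      by auto
    then obtain y where "\<delta> \<le> y" "y \<le> b" "f y = x"
      using IVT2'[of f b x \<delta>] cont' \<delta> by auto
    with \<delta> show thesis
      by (intro that[of y]) auto
  qed
qed

lemma leaf_crosses_vertical_lines:
  assumes Q: "quad_map p \<theta> m n \<phi> W" and Q': "quad_map p \<theta> m' n' \<phi>' W'"
    and M: "ideal_marking p \<theta>" and "m < p" "n < p" "m' < p" "m' \<noteq> m" "m' \<noteq> n"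
    and z: "z \<in> ball 0 1"
  obtains L where "L = 0 \<or> L = W"
    "\<And>x. min L (Re (\<phi> z)) < x \<Longrightarrow> x < max L (Re (\<phi> z)) \<Longrightarrow>
      \<exists>u\<in>ball 0 1. Re (\<phi> u) = x \<and> Re (\<phi>' u) = Re (\<phi>' z)"
proof -
  obtain \<psi>' where hol\<psi>': "\<psi>' holomorphic_on rect 0 W'" and inv1': "\<And>z. z \<in> ball 0 1 \<Longrightarrow> \<psi>' (\<phi>' z) = z"
    and inv2': "\<And>u. u \<in> rect 0 W' \<Longrightarrow> \<psi>' u \<in> ball 0 1 \<and> \<phi>' (\<psi>' u) = u"
    by (rule quad_map_inverse[OF Q']) blast
  define x0' where "x0' = Re (\<phi>' z)"
  define y0' where "y0' = Im (\<phi>' z)"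
  have "\<phi>' z \<in> rect 0 W'"
    using quad_mapD(4)[OF Q'] z by blast
  then have y0': "0 < y0'" "y0' < 1" and x0': "0 < x0'" "x0' < W'"
    by (auto simp: rect_def x0'_def y0'_def)
  have "Complex x0' y0' = \<phi>' z"
    by (simp add: x0'_def y0'_def complex_eq_iff)
  then have \<psi>'_z: "\<psi>' (Complex x0' y0') = z"
    using inv1'[OF z] by simp
  define \<rho> where "\<rho> = (\<lambda>y. Re (\<phi> (\<psi>' (Complex x0' y))))"
  obtain \<zeta>' where \<zeta>': "\<zeta>' \<in> marking_arc p \<theta> m'"
    "((\<lambda>y. \<phi> (\<psi>' (Complex x0' y))) \<longlongrightarrow> \<phi> \<zeta>') (at_right 0)"
    by (rule quad_map_vertical_tendsto[OF Q' x0' inv2' quad_mapD(5)[OF Q]])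
  define L where "L = Re (\<phi> \<zeta>')"
  have L: "L = 0 \<or> L = W"
    using quad_map_other_arc_vertical_side[OF Q M assms(4-8)] \<zeta>'(1) by (auto simp: L_def)
  have \<rho>_lim: "(\<rho> \<longlongrightarrow> L) (at_right 0)"
    unfolding \<rho>_def L_def using \<zeta>'(2) by (rule tendsto_Re)
  have seg: "Complex x0' y \<in> rect 0 W'" if "y \<in> {0<..y0'}" for y
    using that y0' x0' by simp
  then have "\<psi>' (Complex x0' y) \<in> cball 0 1" if "y \<in> {0<..y0'}" for y
    using inv2'[OF seg[OF that]] by simp
  then have \<rho>_cont: "continuous_on {0<..y0'} \<rho>"
    unfolding \<rho>_def using seg
    by (intro continuous_intros continuous_on_compose2[OF quad_mapD(5)[OF Q]]
        continuous_on_compose2[OF holomorphic_on_imp_continuous_on[OF hol\<psi>'] continuous_on_Complex])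
      auto
  have "\<rho> y0' = Re (\<phi> z)"
    by (simp add: \<rho>_def \<psi>'_z)
  show thesis
  proof (rule that[OF L])
    fix x assume "min L (Re (\<phi> z)) < x" "x < max L (Re (\<phi> z))"
    then obtain y where y: "0 < y" "y \<le> y0'" "\<rho> y = x"
      using IVT_at_right[OF \<rho>_lim \<rho>_cont y0'(1)] \<open>\<rho> y0' = Re (\<phi> z)\<close> by metis
    then have "Complex x0' y \<in> rect 0 W'"
      using seg by simp
    then show "\<exists>u\<in>ball 0 1. Re (\<phi> u) = x \<and> Re (\<phi>' u) = Re (\<phi>' z)"
      using inv2' y(3) by (intro bexI[of _ "\<psi>' (Complex x0' y)"]) (auto simp: \<rho>_def x0'_def)
  qed
qed

lemma quad_map_transition:
  assumes Q': "quad_map p \<theta> m' n' \<phi>' W'" and hol: "\<psi> holomorphic_on S"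
    and inv: "\<And>u. u \<in> S \<Longrightarrow> \<psi> u \<in> ball 0 1 \<and> \<phi> (\<psi> u) = u"
  shows "(\<phi>' \<circ> \<psi>) holomorphic_on S" "inj_on (\<phi>' \<circ> \<psi>) S" "(\<phi>' \<circ> \<psi>) ` S \<subseteq> rect 0 W'"
proof -
  show "(\<phi>' \<circ> \<psi>) holomorphic_on S"
    using inv by (intro holomorphic_on_compose_gen[OF hol quad_mapD(2)[OF Q']]) blast
  show "inj_on (\<phi>' \<circ> \<psi>) S"
  proof (rule inj_onI)
    fix u v assume uv: "u \<in> S" "v \<in> S" "(\<phi>' \<circ> \<psi>) u = (\<phi>' \<circ> \<psi>) v"
    then have "\<psi> u = \<psi> v"
      using inv quad_mapD(3)[OF Q'] by (simp add: inj_on_def)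
    then show "u = v"
      using inv uv(1,2) by metis
  qed
  show "(\<phi>' \<circ> \<psi>) ` S \<subseteq> rect 0 W'"
    using inv quad_mapD(4)[OF Q'] by auto
qed

lemma truncated_quads_disjoint_oriented:
  assumes Q: "quad_map p \<theta> m n \<phi> W" and Q': "quad_map p \<theta> m' n' \<phi>' W'"
    and M: "ideal_marking p \<theta>" and "m < p" "n < p" "m' < p" "n' < p"
    and "m \<noteq> m'" "m \<noteq> n'" "m' \<noteq> m" "m' \<noteq> n"
  shows "truncated_quad \<phi> W \<inter> truncated_quad \<phi>' W' = {}"
proof (rule ccontr)
  assume "truncated_quad \<phi> W \<inter> truncated_quad \<phi>' W' \<noteq> {}"
  then obtain z where z: "z \<in> ball 0 1" "1 < Re (\<phi> z)" "Re (\<phi> z) < W - 1"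
    "1 < Re (\<phi>' z)" "Re (\<phi>' z) < W' - 1"
    by (auto simp: truncated_quad_def)
  obtain \<psi> where hol\<psi>: "\<psi> holomorphic_on rect 0 W" and inv1: "\<And>z. z \<in> ball 0 1 \<Longrightarrow> \<psi> (\<phi> z) = z"
    and inv2: "\<And>u. u \<in> rect 0 W \<Longrightarrow> \<psi> u \<in> ball 0 1 \<and> \<phi> (\<psi> u) = u"
    by (rule quad_map_inverse[OF Q]) blast
  obtain L where L: "L = 0 \<or> L = W" and cross: "\<And>x. min L (Re (\<phi> z)) < x \<Longrightarrow> x < max L (Re (\<phi> z)) \<Longrightarrow>
      \<exists>u\<in>ball 0 1. Re (\<phi> u) = x \<and> Re (\<phi>' u) = Re (\<phi>' z)"
    by (rule leaf_crosses_vertical_lines[OF Q Q' M assms(4-6,10,11) z(1)]) blast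
  define a where "a = min L (Re (\<phi> z))"
  define b where "b = max L (Re (\<phi> z))"
  have ab: "0 \<le> a" "b \<le> W" "1 < b - a"
    using L z quad_mapD(1)[OF Q] by (auto simp: a_def b_def)
  then have sub: "rect a b \<subseteq> rect 0 W"
    by (auto simp: rect_def)
  define g where "g = \<phi>' \<circ> \<psi>"
  have hol: "g holomorphic_on rect a b" and inj: "inj_on g (rect a b)" and img: "g ` rect a b \<subseteq> rect 0 W'"
    using quad_map_transition[OF Q' hol\<psi> inv2] sub unfolding g_def
    by (auto intro: holomorphic_on_subset inj_on_subset)
  obtain L' where L': "L' = 0 \<or> L' = W'" "\<And>\<zeta>. \<zeta> \<in> marking_arc p \<theta> m \<Longrightarrow> Re (\<phi>' \<zeta>) = L'"
    using quad_map_other_arc_vertical_side[OF Q' M assms(6,7,4,8,9)] by blast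
  have lim: "((\<lambda>y. Re (g (Complex x y))) \<longlongrightarrow> L') (at_right 0)" if "a < x" "x < b" for x
  proof -
    have "0 < x" "x < W" using that ab by auto
    then obtain \<zeta> where "\<zeta> \<in> marking_arc p \<theta> m" "((\<lambda>y. \<phi>' (\<psi> (Complex x y))) \<longlongrightarrow> \<phi>' \<zeta>) (at_right 0)"
      by (rule quad_map_vertical_tendsto[OF Q _ _ inv2 quad_mapD(5)[OF Q']])
    then show ?thesis
      using L'(2) tendsto_Re by (fastforce simp: g_def)
  qed
  have hit: "\<exists>y. 0 < y \<and> y < 1 \<and> Re (g (Complex x y)) = Re (\<phi>' z)" if "a < x" "x < b" for x
  proof -
    have "min L (Re (\<phi> z)) < x" "x < max L (Re (\<phi> z))"
      using that by (simp_all add: a_def b_def)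
    then obtain u where u: "u \<in> ball 0 1" "Re (\<phi> u) = x" "Re (\<phi>' u) = Re (\<phi>' z)"
      using cross by blast
    then have "\<phi> u \<in> rect 0 W"
      using quad_mapD(4)[OF Q] by blast
    moreover have "Complex x (Im (\<phi> u)) = \<phi> u"
      using u(2) by (simp add: complex_eq_iff)
    ultimately show ?thesis
      using inv1[OF u(1)] u(3) by (intro exI[of _ "Im (\<phi> u)"]) (auto simp: g_def rect_def)
  qed
  show False
    by (rule length_area_contradiction[OF hol inj img lim L'(1) hit ab(3) z(4,5)])
qed

lemma quad_map_choose_bottom:
  assumes Q: "quad_map p \<theta> m n \<phi> W" and "e = m \<or> e = n"
  obtains e' \<Phi> where "quad_map p \<theta> e e' \<Phi> W" "{e, e'} = {m, n}"
    "truncated_quad \<Phi> W = truncated_quad \<phi> W"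
  using assms(2)
proof
  assume "e = m"
  then show thesis
    using that[of n \<phi>] Q by simp
next
  assume "e = n"
  then show thesis
    using that[of m "\<lambda>z. of_real W + \<i> - \<phi> z"] quad_map_swap[OF Q] truncated_quad_swap
    by (simp add: insert_commute)
qed

theorem lemma3p3:
  fixes p :: nat and \<theta> :: "nat \<Rightarrow> real" and m n m' n' :: nat
    and \<phi> \<phi>' :: "complex \<Rightarrow> complex" and W W' :: real
  assumes "ideal_marking p \<theta>"
    and "m < p" "n < p" "m' < p" "n' < p"
    and "\<not> adjacent_idx p m n" "\<not> adjacent_idx p m' n'"
    and "{m, n} \<noteq> {m', n'}"
    and "quad_map p \<theta> m n \<phi> W" "quad_map p \<theta> m' n' \<phi>' W'"
    and "W > 2" "W' > 2"
  shows "truncated_quad \<phi> W \<inter> truncated_quad \<phi>' W' = {}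
    \<and> (\<forall>x x'. 1 < x \<and> x < W - 1 \<and> 1 < x' \<and> x' < W' - 1 \<longrightarrow>
          vertical_leaf \<phi> x \<inter> vertical_leaf \<phi>' x' = {})"
proof -
  note Q = assms(9) and Q' = assms(10)
  have "m \<noteq> n" "m' \<noteq> n'"
    using quad_map_indices_distinct[OF Q] quad_map_indices_distinct[OF Q'] .
  then obtain e where e: "e = m \<or> e = n" "e \<noteq> m'" "e \<noteq> n'"
    using assms(8) by blast
  obtain e' where e': "e' = m' \<or> e' = n'" "e' \<noteq> m" "e' \<noteq> n"
    using assms(8) \<open>m \<noteq> n\<close> \<open>m' \<noteq> n'\<close> by blast
  obtain f \<Phi> where \<Phi>: "quad_map p \<theta> e f \<Phi> W" "{e, f} = {m, n}" "truncated_quad \<Phi> W = truncated_quad \<phi> W"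
    by (rule quad_map_choose_bottom[OF Q e(1)])
  obtain f' \<Phi>' where \<Phi>': "quad_map p \<theta> e' f' \<Phi>' W'" "{e', f'} = {m', n'}"
    "truncated_quad \<Phi>' W' = truncated_quad \<phi>' W'"
    by (rule quad_map_choose_bottom[OF Q' e'(1)])
  have "f = m \<or> f = n" "f' = m' \<or> f' = n'"
    using \<Phi>(2) \<Phi>'(2) by (metis insertCI doubleton_eq_iff)+
  then have "e < p" "f < p" "e' < p" "f' < p" "e \<noteq> e'" "e \<noteq> f'" "e' \<noteq> e" "e' \<noteq> f"
    using e e' assms(2-5) by metis+
  then have "truncated_quad \<Phi> W \<inter> truncated_quad \<Phi>' W' = {}"
    by (rule truncated_quads_disjoint_oriented[OF \<Phi>(1) \<Phi>'(1) assms(1)])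
  then have disjoint: "truncated_quad \<phi> W \<inter> truncated_quad \<phi>' W' = {}"
    using \<Phi>(3) \<Phi>'(3) by simp
  moreover have "vertical_leaf \<phi> x \<subseteq> truncated_quad \<phi> W" "vertical_leaf \<phi>' x' \<subseteq> truncated_quad \<phi>' W'"
    if "1 < x \<and> x < W - 1 \<and> 1 < x' \<and> x' < W' - 1" for x x'
    using that by (auto simp: vertical_leaf_def truncated_quad_def)
  ultimately show ?thesis
    by blast
qed

end
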